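(* Consider the discrete-time system $x_{k+1}=f(x_k,u_k,w_k)$, $y_k=h(x_k,v_k)$ with $x_k\in\mathbb{X}\subset\mathbb{R}^n$, $u_k\in\mathbb{U}\subseteq\mathbb{R}^m$, $w_k\in\mathbb{R}^q$, $v_k\in\mathbb{V}\subset\mathbb{R}^r$, $y_k\in\mathbb{Y}\subset\mathbb{R}^p$, $f,h$ continuously differentiable, $\mathbb{Z}:=\mathbb{X}\times\mathbb{U}\times\mathbb{R}^q\times\mathbb{V}\times\mathbb{Y}$, and suppose it is strongly nonlinearly detectable. Let $\alpha_1,\alpha_2\in\mathcal{K}_\infty$, $\sigma_v,\sigma_y\in\mathcal{K}$, $\mu\in(0,1)$ and $V:\mathbb{X}\times\mathbb{X}\to\mathbb{R}_{\ge0}$ satisfy $\alpha_1(\|x-\widetilde{x}\|)\le V(x,\widetilde{x})\le\alpha_2(\|x-\widetilde{x}\|)$ and $V(f(x,u,w),f(\widetilde{x},u,\widetilde{w}))\le\mu V(x,\widetilde{x})+\sigma_v(\|v-\widetilde{v}\|)+\sigma_v(\|v^+-\widetilde{v}^+\|)+\sigma_y(\|y-\widetilde{y}\|)+\sigma_y(\|y^+-\widetilde{y}^+\|)$ for all $(x,u,w,v,y),(\widetilde{x},u,\widetilde{w},\widetilde{v},\widetilde{y})\in\mathbb{Z}$, $v^+,\widetilde{v}^+\in\mathbb{V}$ with $y=h(x,v)$, $\widetilde{y}=h(\widetilde{x},\widetilde{v})$, $y^+=h(f(x,u,w),v^+)\in\mathbb{Y}$, $\widetilde{y}^+=h(f(\widetilde{x},u,\widetilde{w}),\widetilde{v}^+)\in\mathbb{Y}$.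 Fix a horizon $N\in\mathbb{N}$, let $N_k:=\min(N,k)$, and define the moving horizon estimator $MHE_{N_k}$: given priors $\bar{x}_0\in\mathbb{X}$ and $\bar{v}_i\in\mathbb{V}$, at each $k\ge0$ minimize $$\mu^{N_k}\alpha_2(2\|\hat{x}_{k-N_k|k}-\hat{x}_{k-N_k}\|)+\sum_{j=0}^{N_k}2\mu^{j-1}\sigma_v(2\|\hat{v}_{k-j|k}-\bar{v}_{k-j}\|)+\sum_{j=0}^{N_k}2\mu^{j-1}\sigma_y(\|y_{k-j}-\hat{y}_{k-j|k}\|)$$ over $\hat{x}_{k-N_k|k}$, $(\hat{v}_{j|k})$, $(\hat{w}_{j|k})$ subject to $\hat{x}_{j+1|k}=f(\hat{x}_{j|k},u_j,\hat{w}_{j|k})$ for $j\in\{k-N_k,\dots,k-1\}$ and $\hat{y}_{j|k}=h(\hat{x}_{j|k},\hat{v}_{j|k})$, $\hat{x}_{j|k}\in\mathbb{X}$, $\hat{v}_{j|k}\in\mathbb{V}$, $\hat{w}_{j|k}\in\mathbb{R}^q$, $\hat{y}_{j|k}\in\mathbb{Y}$ for $j\in\{k-N_k,\dots,k\}$; the estimate is $\hat{x}^\star_{k|k}$ from an optimal solution, and the priors are $\hat{x}_0:=\bar{x}_0$ and $\hat{x}_k:=\hat{x}^\star_{k|k}$ for $k>0$. If $N$ is such that there is $\rho\in(0,1)$ with $$2\mu^N\alpha_2\big(2\alpha_1^{-1}(r)\big)<\rho r\quad\text{for all } r\in(0,\infty),$$ then $MHE_{N_k}$ is an unknown input state esti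mator.
   Context: A solution of the system is a sequence in $\mathbb{Z}^\infty$ satisfying the system equations. $\mathcal{K}$, $\mathcal{K}_\infty$, $\mathcal{KL}$ are the usual comparison function classes; a $\mathcal{KL}$-function $\beta$ is summable if there is $\alpha\in\mathcal{K}$ with $\sum_{k\ge0}\beta(r,k)\le\alpha(r)$ for all $r\ge0$. Strong nonlinear detectability: there exist $\alpha\in\mathcal{K}_\infty$, $\alpha_0\in\mathcal{KL}$, summable $\alpha_v,\alpha_y\in\mathcal{KL}$ with $\alpha(\|x_k-\widetilde{x}_k\|)\le\alpha_0(\|x_0-\widetilde{x}_0\|,k)+\sum_{i=0}^k(\alpha_v(\|v_{k-i}-\widetilde{v}_{k-i}\|,i)+\alpha_y(\|y_{k-i}-\widetilde{y}_{k-i}\|,i))$ for all $k\ge0$ and all pairs of solutions sharing the same control input sequence. A state estimator is a sequence of maps $\hat{x}_k=\Psi_k(\bar{x}_0,\bar{\boldsymbol{v}}_{[0,k]},\boldsymbol{u}_{[0,k-1]},\boldsymbol{y}_{[0,k]})$; it is an unknown input state estimator if there exist $\beta\in\mathcal{K}_\infty$, $\beta_0\in\mathcal{KL}$ and a summable $\beta_v\in\mathcal{KL}$ such that $\beta(\|x_k-\hat{x}_k\|)\le\beta_0(\|x_0-\bar{x}_0\|,k)+\sum_{i=0}^k\beta_v(\|v_{k-i}-\bar{v}_{k-i}\|,i)$ for all $k\ge0$, all priors and every trajectory of the system. *)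

theory Defs
  imports "HOL-Analysis.Analysis"
begin

definition class_K :: "(real \<Rightarrow> real) \<Rightarrow> bool" where
  "class_K \<alpha> \<longleftrightarrow> continuous_on {0..} \<alpha> \<and> \<alpha> 0 = 0 \<and> strict_mono_on {0..} \<alpha>"

definition class_Kinf :: "(real \<Rightarrow> real) \<Rightarrow> bool" where
  "class_Kinf \<alpha> \<longleftrightarrow> class_K \<alpha> \<and> filterlim \<alpha> at_top at_top"

definition class_KL :: "(real \<Rightarrow> nat \<Rightarrow> real) \<Rightarrow> bool" where
  "class_KL \<beta> \<longleftrightarrow> (\<forall>k. class_K (\<lambda>r. \<beta> r k)) \<and>
     (\<forall>r\<ge>0. antimono (\<beta> r) \<and> (\<beta> r \<longlonglongrightarrow> 0))"

definition summable_KL :: "(real \<Rightarrow> nat \<Rightarrow> real) \<Rightarrow> bool" where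
  "summable_KL \<beta> \<longleftrightarrow> class_KL \<beta> \<and>
     (\<exists>\<alpha>. class_K \<alpha> \<and> (\<forall>r\<ge>0. summable (\<beta> r) \<and> (\<Sum>k. \<beta> r k) \<le> \<alpha> r))"

definition C1_fun :: "('a::real_normed_vector \<Rightarrow> 'b::real_normed_vector) \<Rightarrow> bool" where
  "C1_fun F \<longleftrightarrow> (\<exists>F'. (\<forall>z. (F has_derivative blinfun_apply (F' z)) (at z)) \<and> continuous_on UNIV F')"

definition is_solution ::
  "('x \<Rightarrow> 'u \<Rightarrow> 'w \<Rightarrow> 'x) \<Rightarrow> ('x \<Rightarrow> 'v \<Rightarrow> 'y) \<Rightarrow> 'x set \<Rightarrow> 'u set \<Rightarrow> 'v set \<Rightarrow> 'y set \<Rightarrow>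
   (nat \<Rightarrow> 'x) \<Rightarrow> (nat \<Rightarrow> 'u) \<Rightarrow> (nat \<Rightarrow> 'w) \<Rightarrow> (nat \<Rightarrow> 'v) \<Rightarrow> (nat \<Rightarrow> 'y) \<Rightarrow> bool" where
  "is_solution f h X U V Y x u w v y \<longleftrightarrow>
     (\<forall>k. x k \<in> X \<and> u k \<in> U \<and> v k \<in> V \<and> y k \<in> Y \<and>
          x (Suc k) = f (x k) (u k) (w k) \<and> y k = h (x k) (v k))"

definition strongly_nl_detectable ::
  "('x::real_normed_vector \<Rightarrow> 'u \<Rightarrow> 'w \<Rightarrow> 'x) \<Rightarrow> ('x \<Rightarrow> 'v::real_normed_vector \<Rightarrow> 'y::real_normed_vector) \<Rightarrow>
   'x set \<Rightarrow> 'u set \<Rightarrow> 'v set \<Rightarrow> 'y set \<Rightarrow> bool" where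
  "strongly_nl_detectable f h X U V Y \<longleftrightarrow>
     (\<exists>\<alpha> \<alpha>0 \<alpha>v \<alpha>y. class_Kinf \<alpha> \<and> class_KL \<alpha>0 \<and> summable_KL \<alpha>v \<and> summable_KL \<alpha>y \<and>
       (\<forall>x u w v y x' w' v' y'.
          is_solution f h X U V Y x u w v y \<longrightarrow> is_solution f h X U V Y x' u w' v' y' \<longrightarrow>
          (\<forall>k. \<alpha> (norm (x k - x' k)) \<le> \<alpha>0 (norm (x 0 - x' 0)) k +
                (\<Sum>i\<le>k. \<alpha>v (norm (v (k - i) - v' (k - i))) i + \<alpha>y (norm (y (k - i) - y' (k - i))) i))))"

text \<open>Decision variables at time k are given as functions of absolute time j
  (only j in {k - N_k..k} matter): xs (state; only xs (k-N_k) is free, the rest is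
  determined by the dynamics), vs and ws.\<close>

definition mhe_feasible ::
  "('x \<Rightarrow> 'u \<Rightarrow> 'w \<Rightarrow> 'x) \<Rightarrow> ('x \<Rightarrow> 'v \<Rightarrow> 'y) \<Rightarrow> 'x set \<Rightarrow> 'v set \<Rightarrow> 'y set \<Rightarrow>
   nat \<Rightarrow> nat \<Rightarrow> (nat \<Rightarrow> 'u) \<Rightarrow> (nat \<Rightarrow> 'x) \<Rightarrow> (nat \<Rightarrow> 'v) \<Rightarrow> (nat \<Rightarrow> 'w) \<Rightarrow> bool" where
  "mhe_feasible f h X V Y N k u xs vs ws \<longleftrightarrow>
     (\<forall>j\<in>{k - min N k..<k}. xs (Suc j) = f (xs j) (u j) (ws j)) \<and>
     (\<forall>j\<in>{k - min N k..k}. xs j \<in> X \<and> vs j \<in> V \<and> h (xs j) (vs j) \<in> Y)"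

definition mhe_cost ::
  "('x::real_normed_vector \<Rightarrow> 'v::real_normed_vector \<Rightarrow> 'y::real_normed_vector) \<Rightarrow>
   real \<Rightarrow> (real \<Rightarrow> real) \<Rightarrow> (real \<Rightarrow> real) \<Rightarrow> (real \<Rightarrow> real) \<Rightarrow>
   nat \<Rightarrow> nat \<Rightarrow> 'x \<Rightarrow> (nat \<Rightarrow> 'v) \<Rightarrow> (nat \<Rightarrow> 'y) \<Rightarrow> (nat \<Rightarrow> 'x) \<Rightarrow> (nat \<Rightarrow> 'v) \<Rightarrow> real" where
  "mhe_cost h \<mu> \<alpha>2 \<sigma>v \<sigma>y N k prior vbar y xs vs =
     \<mu> ^ (min N k) * \<alpha>2 (2 * norm (xs (k - min N k) - prior)) +
     (\<Sum>j\<le>min N k. 2 * \<mu> powi (int j - 1) * \<sigma>v (2 * norm (vs (k - j) - vbar (k - j)))) +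
     (\<Sum>j\<le>min N k. 2 * \<mu> powi (int j - 1) * \<sigma>y (norm (y (k - j) - h (xs (k - j)) (vs (k - j)))))"

definition mhe_estimates ::
  "('x::real_normed_vector \<Rightarrow> 'u \<Rightarrow> 'w \<Rightarrow> 'x) \<Rightarrow> ('x \<Rightarrow> 'v::real_normed_vector \<Rightarrow> 'y::real_normed_vector) \<Rightarrow>
   'x set \<Rightarrow> 'v set \<Rightarrow> 'y set \<Rightarrow>
   real \<Rightarrow> (real \<Rightarrow> real) \<Rightarrow> (real \<Rightarrow> real) \<Rightarrow> (real \<Rightarrow> real) \<Rightarrow> nat \<Rightarrow>
   'x \<Rightarrow> (nat \<Rightarrow> 'v) \<Rightarrow> (nat \<Rightarrow> 'u) \<Rightarrow> (nat \<Rightarrow> 'y) \<Rightarrow> (nat \<Rightarrow> 'x) \<Rightarrow> bool" where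
  "mhe_estimates f h X V Y \<mu> \<alpha>2 \<sigma>v \<sigma>y N xbar0 vbar u y xhat \<longleftrightarrow>
     (\<forall>k. let prior = (if k - min N k = 0 then xbar0 else xhat (k - min N k)) in
        (\<exists>xs vs ws. mhe_feasible f h X V Y N k u xs vs ws \<and>
           (\<forall>xs' vs' ws'. mhe_feasible f h X V Y N k u xs' vs' ws' \<longrightarrow>
              mhe_cost h \<mu> \<alpha>2 \<sigma>v \<sigma>y N k prior vbar y xs vs
                \<le> mhe_cost h \<mu> \<alpha>2 \<sigma>v \<sigma>y N k prior vbar y xs' vs') \<and>
           xhat k = xs k))"

end

theory Submission
  imports Defs
begin

(* Proof idea: on the window of time k, compare the true trajectory with the optimal one.
   Unrolling the decrease of Vf along the window bounds alpha1 of the terminal error by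
   mu^N_k times the prior error plus the disturbance and output mismatches of the estimate,
   and since the true trajectory is a feasible candidate, optimality bounds all of these by
   twice the cost of the true trajectory.  With rho from the horizon condition this yields the
   delayed recursion e_k <= rho e_(k-N) + (noise terms) for e_k = alpha1 |x_k - xhat_k|, which
   unrolls into a geometric bound with any rate l >= mu such that l^(N+1) >= rho. *)

lemma class_K_mono:
  assumes "class_K a" "0 \<le> r" "r \<le> s"
  shows "a r \<le> a s"
proof (cases "r = s")
  case False
  then have "a r < a s"
    using assms unfolding class_K_def by (intro strict_mono_onD[of "{0..}" a]) auto
  then show ?thesis by simp
qed simp

lemma class_K_nonneg: "class_K a \<Longrightarrow> 0 \<le> r \<Longrightarrow> 0 \<le> a r"
  using class_K_mono[of a 0 r] by (simp add: class_K_def)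

lemma class_K_pos: "class_K a \<Longrightarrow> 0 < r \<Longrightarrow> 0 < a r"
  unfolding class_K_def using strict_mono_onD[of "{0..}" a 0 r] by auto

lemma class_K_norm_diff_le:
  fixes p q c :: "'a::real_normed_vector"
  assumes a: "class_K a"
  shows "a (norm (p - q)) \<le> a (2 * norm (p - c)) + a (2 * norm (q - c))"
proof -
  have "norm (p - q) \<le> norm (p - c) + norm (q - c)"
    using norm_triangle_ineq4[of "p - c" "q - c"] by simp
  also have "\<dots> \<le> 2 * max (norm (p - c)) (norm (q - c))" by linarith
  finally have "a (norm (p - q)) \<le> a (2 * max (norm (p - c)) (norm (q - c)))"
    by (rule class_K_mono[OF a norm_ge_zero])
  also have "\<dots> \<le> a (2 * norm (p - c)) + a (2 * norm (q - c))"
    using class_K_nonneg[OF a, of "2 * norm (p - c)"] class_K_nonneg[OF a, of "2 * norm (q - c)"]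
    by (simp add: max_def)
  finally show ?thesis .
qed

lemma class_K_inv_into_bound:
  assumes a: "class_K a" and g: "\<And>r. 0 < r \<Longrightarrow> g (inv_into {0..} a r) < \<rho> * r"
    and g0: "g 0 \<le> 0" and e: "0 \<le> e"
  shows "g e \<le> \<rho> * a e"
proof (cases "e = 0")
  case True
  then show ?thesis using a g0 by (simp add: class_K_def)
next
  case False
  have "inj_on a {0..}"
    using a by (auto simp: class_K_def intro: strict_mono_on_imp_inj_on)
  then have "inv_into {0..} a (a e) = e" using e by simp
  then show ?thesis using g[of "a e"] class_K_pos[OF a, of e] e False by simp
qed

lemma class_K_scaled:
  assumes a: "class_K a" and "0 < c" "0 < b"
  shows "class_K (\<lambda>r. c * a (b * r))"
  unfolding class_K_def
proof (intro conjI)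
  have "continuous_on {0..} a" using a by (simp add: class_K_def)
  then have "continuous_on {0..} (\<lambda>r::real. a (b * r))"
    by (rule continuous_on_compose2) (use \<open>0 < b\<close> in \<open>auto intro!: continuous_intros\<close>)
  then show "continuous_on {0..} (\<lambda>r. c * a (b * r))" by (intro continuous_intros)
  show "c * a (b * 0) = 0" using a by (simp add: class_K_def)
  show "strict_mono_on {0..} (\<lambda>r. c * a (b * r))"
  proof (rule strict_mono_onI)
    fix r s :: real assume "r \<in> {0..}" "s \<in> {0..}" "r < s"
    then have "a (b * r) < a (b * s)"
      using a \<open>0 < b\<close> unfolding class_K_def by (intro strict_mono_onD[of "{0..}" a]) auto
    then show "c * a (b * r) < c * a (b * s)" using \<open>0 < c\<close> by simp
  qed
qed

lemma class_KL_geometric: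
  assumes a: "class_K a" and "0 < c" "0 < b" and l: "0 < l" "l < 1"
  shows "class_KL (\<lambda>r k. c * l ^ k * a (b * r))"
  unfolding class_KL_def
proof (intro conjI allI impI)
  show "class_K (\<lambda>r. c * l ^ k * a (b * r))" for k
    using class_K_scaled[OF a, of "c * l ^ k" b] assms by simp
  fix r :: real assume "0 \<le> r"
  then have ar: "0 \<le> a (b * r)" using class_K_nonneg[OF a] \<open>0 < b\<close> by simp
  show "antimono (\<lambda>k. c * l ^ k * a (b * r))"
  proof (rule antimonoI)
    fix k k' :: nat assume "k \<le> k'"
    then have "l ^ k' \<le> l ^ k" using l by (intro power_decreasing) auto
    then show "c * l ^ k' * a (b * r) \<le> c * l ^ k * a (b * r)"
      using ar \<open>0 < c\<close> by (intro mult_right_mono mult_left_mono) auto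
  qed
  have "(\<lambda>k. l ^ k) \<longlonglongrightarrow> 0" using l by (intro LIMSEQ_power_zero) auto
  then have "(\<lambda>k. c * l ^ k * a (b * r)) \<longlonglongrightarrow> c * 0 * a (b * r)"
    by (intro tendsto_mult_right tendsto_mult_left)
  then show "(\<lambda>k. c * l ^ k * a (b * r)) \<longlonglongrightarrow> 0" by simp
qed

lemma summable_KL_geometric:
  assumes a: "class_K a" and "0 < c" "0 < b" and l: "0 < l" "l < 1"
  shows "summable_KL (\<lambda>r k. c * l ^ k * a (b * r))"
  unfolding summable_KL_def
proof (intro conjI exI allI impI)
  show "class_KL (\<lambda>r k. c * l ^ k * a (b * r))" using class_KL_geometric assms by blast
  show "class_K (\<lambda>r. c / (1 - l) * a (b * r))"
    using class_K_scaled[OF a, of "c / (1 - l)" b] assms by simp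
  fix r :: real
  have "(\<lambda>k. l ^ k) sums (1 / (1 - l))" using l by (intro geometric_sums) auto
  then have "(\<lambda>k. c * l ^ k * a (b * r)) sums (c * (1 / (1 - l)) * a (b * r))"
    by (intro sums_mult2 sums_mult)
  then show "summable (\<lambda>k. c * l ^ k * a (b * r))"
    and "(\<Sum>k. c * l ^ k * a (b * r)) \<le> c / (1 - l) * a (b * r)"
    by (auto simp: sums_iff)
qed

lemma exists_rate_above:
  fixes \<mu> \<rho> :: real
  assumes "0 \<le> \<mu>" "\<mu> < 1" "0 < \<rho>" "\<rho> < 1"
  obtains l where "0 < l" "l < 1" "\<mu> \<le> l" "\<rho> \<le> l ^ Suc N"
proof
  let ?r = "root (Suc N) \<rho>"
  have r: "0 < ?r" "?r < 1" "?r ^ Suc N = \<rho>"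
    using assms real_root_pow_pos2[of "Suc N" \<rho>] by (auto simp del: power_Suc)
  show "0 < max \<mu> ?r" by (rule max.strict_coboundedI2) (rule r(1))
  show "max \<mu> ?r < 1" using assms(2) r(2) by (simp only: max_less_iff_conj)
  show "\<mu> \<le> max \<mu> ?r" by simp
  have "?r ^ Suc N \<le> max \<mu> ?r ^ Suc N" using r by (intro power_mono) auto
  then show "\<rho> \<le> max \<mu> ?r ^ Suc N" using r by simp
qed

(* The weight with which d (t + M - j) enters after unrolling W (i + 1) <= m W i + d i + d (i + 1)
   over M steps: every d i is fed in at two consecutive steps. *)
definition chain_weight :: "real \<Rightarrow> nat \<Rightarrow> real" where
  "chain_weight m j = (if j = 0 then 1 else m ^ (j - 1) * (1 + m))"

lemma chain_weight_nonneg: "0 \<le> m \<Longrightarrow> 0 \<le> chain_weight m j"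
  by (simp add: chain_weight_def)

lemma chain_weight_Suc: "chain_weight m (Suc j) = m * chain_weight m j + (if j = 0 then 1 else 0)"
  by (cases j) (auto simp: chain_weight_def algebra_simps)

lemma chain_weight_le:
  assumes "0 < m" "m < 1"
  shows "chain_weight m j \<le> 2 * m powi (int j - 1)"
proof (cases j)
  case (Suc i)
  have "m ^ i * m \<le> m ^ i" using assms by (simp add: mult_left_le)
  then show ?thesis using Suc assms by (simp add: chain_weight_def power_int_diff field_simps)
qed (use assms in \<open>simp add: chain_weight_def power_int_diff field_simps\<close>)

lemma unrolled_recursion_bound:
  fixes W d :: "nat \<Rightarrow> real"
  assumes m: "0 \<le> m" and d: "\<And>i. 0 \<le> d i"
    and step: "\<And>i. t \<le> i \<Longrightarrow> i < t + M \<Longrightarrow> W (Suc i) \<le> m * W i + d i + d (Suc i)"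
  shows "W (t + M) \<le> m ^ M * W t + (\<Sum>j\<le>M. chain_weight m j * d (t + M - j))"
  using step
proof (induction M)
  case 0
  then show ?case using d[of t] by (simp add: chain_weight_def)
next
  case (Suc M)
  let ?S = "\<lambda>M. \<Sum>j\<le>M. chain_weight m j * d (t + M - j)"
  have IH: "W (t + M) \<le> m ^ M * W t + ?S M" using Suc by simp
  have "?S (Suc M) = d (Suc (t + M)) + (\<Sum>j\<le>M. chain_weight m (Suc j) * d (t + M - j))"
    by (subst sum.atMost_Suc_shift) (simp add: chain_weight_def)
  also have "(\<Sum>j\<le>M. chain_weight m (Suc j) * d (t + M - j))
      = (\<Sum>j\<le>M. m * (chain_weight m j * d (t + M - j)) + (if j = 0 then d (t + M) else 0))"
    by (rule sum.cong) (auto simp: chain_weight_Suc algebra_simps)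
  also have "\<dots> = m * ?S M + d (t + M)"
    by (simp add: sum.distrib sum_distrib_left)
  finally have S: "?S (Suc M) = m * ?S M + d (t + M) + d (Suc (t + M))" by simp
  have "W (Suc (t + M)) \<le> m * W (t + M) + d (t + M) + d (Suc (t + M))" using Suc by simp
  also have "\<dots> \<le> m * (m ^ M * W t + ?S M) + d (t + M) + d (Suc (t + M))"
    using IH m by (simp add: mult_left_mono)
  finally show ?case using S by (simp add: algebra_simps)
qed

lemma sum_atMost_add_split:
  fixes N n :: nat
  shows "(\<Sum>i\<le>N + n. g i) = (\<Sum>i<N. g i) + (\<Sum>i\<le>n. g (N + i))"
  by (induction n) (simp_all add: lessThan_Suc_atMost[symmetric] add.assoc)

lemma mult_le_geometric_weight:
  fixes c C l s :: real
  assumes "0 \<le> C" "0 < l" "l < 1" "c \<le> C * l ^ j" "0 \<le> s"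
  shows "c * s \<le> C / (1 - l) * l ^ j * s"
proof -
  have "C * l ^ j \<le> C / (1 - l) * l ^ j"
    using assms by (intro mult_right_mono) (auto simp: field_simps mult_left_le)
  then show ?thesis using assms by (meson order_trans mult_right_mono)
qed

lemma delayed_recursion_step:
  fixes s c :: "nat \<Rightarrow> real"
  assumes l: "0 < l" "l < 1" and \<rho>: "0 \<le> \<rho>" "\<rho> \<le> l ^ Suc N"
    and C: "0 \<le> C" and c: "\<And>j. c j \<le> C * l ^ j" and s: "\<And>i. 0 \<le> s i"
  defines "B \<equiv> C / (1 - l)"
  shows "\<rho> * (\<Sum>i\<le>n. B * l ^ i * s (n - i)) + (\<Sum>j\<le>N. c j * s (N + n - j))
    \<le> (\<Sum>i\<le>N + n. B * l ^ i * s (N + n - i))"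
proof -
  have CB: "C = B * (1 - l)" using l by (simp add: B_def)
  have "c j * s i \<le> B * l ^ j * s i" for i j
    unfolding B_def using C l c s by (rule mult_le_geometric_weight)
  then have head: "(\<Sum>j<N. c j * s (N + n - j)) \<le> (\<Sum>i<N. B * l ^ i * s (N + n - i))"
    by (intro sum_mono)
  have "c N * s n \<le> C * l ^ (N + 0) * s (n - 0)"
    using c s by (simp add: mult_right_mono)
  also have "\<dots> \<le> (\<Sum>i\<le>n. C * l ^ (N + i) * s (n - i))"
    using C l s by (intro member_le_sum[of 0 "{..n}" "\<lambda>i. C * l ^ (N + i) * s (n - i)"]) auto
  finally have last: "c N * s n \<le> (\<Sum>i\<le>n. C * l ^ (N + i) * s (n - i))" .
  have "\<rho> * (B * l ^ i) + C * l ^ (N + i) \<le> B * l ^ (N + i)" for i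
  proof -
    have "0 \<le> B" using C l by (simp add: B_def)
    then have "\<rho> * (B * l ^ i) \<le> l ^ Suc N * (B * l ^ i)"
      using \<rho> l by (intro mult_right_mono) auto
    then show ?thesis unfolding CB by (simp add: power_add algebra_simps)
  qed
  then have tail: "\<rho> * (\<Sum>i\<le>n. B * l ^ i * s (n - i)) + (\<Sum>i\<le>n. C * l ^ (N + i) * s (n - i))
      \<le> (\<Sum>i\<le>n. B * l ^ (N + i) * s (n - i))"
    using s by (simp add: sum_distrib_left sum.distrib[symmetric] sum_mono mult_right_mono
        distrib_right[symmetric] mult.assoc[symmetric])
  have "(\<Sum>j\<le>N. c j * s (N + n - j)) = (\<Sum>j<N. c j * s (N + n - j)) + c N * s n"
    by (simp add: lessThan_Suc_atMost[symmetric])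
  moreover have "(\<Sum>i\<le>N + n. B * l ^ i * s (N + n - i))
      = (\<Sum>i<N. B * l ^ i * s (N + n - i)) + (\<Sum>i\<le>n. B * l ^ (N + i) * s (n - i))"
    by (simp add: sum_atMost_add_split)
  ultimately show ?thesis using head last tail by linarith
qed

lemma delayed_recursion_bound:
  fixes a s c :: "nat \<Rightarrow> real"
  assumes l: "0 < l" "l < 1" and \<rho>: "0 \<le> \<rho>" "\<rho> \<le> l ^ Suc N"
    and C: "0 \<le> C" and c: "\<And>j. c j \<le> C * l ^ j" and s: "\<And>i. 0 \<le> s i" and E: "0 \<le> E"
    and base: "\<And>k. k \<le> N \<Longrightarrow> a k \<le> l ^ k * E + (\<Sum>j\<le>k. c j * s (k - j))"
    and step: "\<And>k. N < k \<Longrightarrow> a k \<le> \<rho> * a (k - N) + (\<Sum>j\<le>N. c j * s (k - j))"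
  shows "a k \<le> l ^ k * E + (\<Sum>i\<le>k. C / (1 - l) * l ^ i * s (k - i))"
proof (induction k rule: less_induct)
  case (less k)
  define B where "B = C / (1 - l)"
  have cB: "c j * s i \<le> B * l ^ j * s i" for i j
    unfolding B_def using C l c s by (rule mult_le_geometric_weight)
  consider "k \<le> N" | "N = 0" "0 < k" | "0 < N" "N < k" by linarith
  then show ?case
  proof cases
    case 1
    have "(\<Sum>j\<le>k. c j * s (k - j)) \<le> (\<Sum>i\<le>k. B * l ^ i * s (k - i))"
      using cB by (intro sum_mono)
    then show ?thesis using base[OF 1] unfolding B_def by linarith
  next
    case 2
    have "a k \<le> \<rho> * a k + c 0 * s k" using step[of k] 2 by simp
    moreover have "c 0 * s k \<le> C * s k" using c[of 0] s[of k] by (simp add: mult_right_mono)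
    ultimately have "(1 - \<rho>) * a k \<le> C * s k" by (simp add: algebra_simps)
    moreover have "0 < 1 - l" "1 - l \<le> 1 - \<rho>" using l \<rho> 2 by auto
    ultimately have "a k \<le> C * s k / (1 - \<rho>)" by (simp add: pos_le_divide_eq mult.commute)
    also have "\<dots> \<le> B * l ^ 0 * s (k - 0)"
      using \<open>0 < 1 - l\<close> \<open>1 - l \<le> 1 - \<rho>\<close> C s[of k]
      by (simp add: B_def divide_left_mono)
    also have "\<dots> \<le> (\<Sum>i\<le>k. B * l ^ i * s (k - i))"
      using C l s by (intro member_le_sum[of 0 "{..k}" "\<lambda>i. B * l ^ i * s (k - i)"])
        (auto simp: B_def)
    finally show ?thesis using l E unfolding B_def by (simp add: add_increasing)
  next
    case 3
    define n where "n = k - N"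
    have "k = N + n" "n < k" using 3 by (auto simp: n_def)
    have "l * l ^ N \<le> l ^ N" using l by (intro mult_left_le_one_le) auto
    then have "\<rho> \<le> l ^ N" using \<rho>(2) by simp
    then have "\<rho> * (l ^ n * E) \<le> l ^ N * (l ^ n * E)"
      using l E by (intro mult_right_mono) auto
    then have E_term: "\<rho> * (l ^ n * E) \<le> l ^ k * E"
      using \<open>k = N + n\<close> by (simp add: power_add mult.assoc)
    have "a k \<le> \<rho> * a n + (\<Sum>j\<le>N. c j * s (N + n - j))"
      using step[OF \<open>N < k\<close>] \<open>k = N + n\<close> by simp
    also have "\<dots> \<le> \<rho> * (l ^ n * E + (\<Sum>i\<le>n. B * l ^ i * s (n - i)))
        + (\<Sum>j\<le>N. c j * s (N + n - j))"
      using less[OF \<open>n < k\<close>] \<rho>(1) unfolding B_def by (simp add: mult_left_mono)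
    also have "\<dots> \<le> l ^ k * E + (\<rho> * (\<Sum>i\<le>n. B * l ^ i * s (n - i))
        + (\<Sum>j\<le>N. c j * s (N + n - j)))"
      using E_term by (simp add: distrib_left)
    also have "\<dots> \<le> l ^ k * E + (\<Sum>i\<le>k. B * l ^ i * s (k - i))"
      using delayed_recursion_step[OF l \<rho> C c s, where n = n] \<open>k = N + n\<close> by (simp add: B_def)
    finally show ?thesis unfolding B_def .
  qed
qed

lemma solution_mhe_feasible:
  "is_solution f h X U V Y x u w v y \<Longrightarrow> mhe_feasible f h X V Y N k u x v w"
  unfolding is_solution_def mhe_feasible_def by metis

locale incremental_ioss_lyapunov =
  fixes f :: "'x::real_normed_vector \<Rightarrow> 'u \<Rightarrow> 'w \<Rightarrow> 'x"
    and h :: "'x \<Rightarrow> 'v::real_normed_vector \<Rightarrow> 'y::real_normed_vector"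
    and X :: "'x set" and U :: "'u set" and V :: "'v set" and Y :: "'y set"
    and Vf :: "'x \<Rightarrow> 'x \<Rightarrow> real"
    and \<alpha>1 \<alpha>2 \<sigma>v \<sigma>y :: "real \<Rightarrow> real" and \<mu> :: real
  assumes \<alpha>1: "class_K \<alpha>1" and \<alpha>2: "class_K \<alpha>2" and \<sigma>v: "class_K \<sigma>v" and \<sigma>y: "class_K \<sigma>y"
    and \<mu>: "0 < \<mu>" "\<mu> < 1"
    and Vf_bounds: "\<And>x x'. x \<in> X \<Longrightarrow> x' \<in> X \<Longrightarrow>
          \<alpha>1 (norm (x - x')) \<le> Vf x x' \<and> Vf x x' \<le> \<alpha>2 (norm (x - x'))"
    and Vf_decr: "\<And>x u w v y x' w' v' y' vp vp'.
          x \<in> X \<Longrightarrow> u \<in> U \<Longrightarrow> v \<in> V \<Longrightarrow> y \<in> Y \<Longrightarrow>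
          x' \<in> X \<Longrightarrow> v' \<in> V \<Longrightarrow> y' \<in> Y \<Longrightarrow> vp \<in> V \<Longrightarrow> vp' \<in> V \<Longrightarrow>
          y = h x v \<Longrightarrow> y' = h x' v' \<Longrightarrow>
          h (f x u w) vp \<in> Y \<Longrightarrow> h (f x' u w') vp' \<in> Y \<Longrightarrow>
          Vf (f x u w) (f x' u w') \<le> \<mu> * Vf x x' + \<sigma>v (norm (v - v')) + \<sigma>v (norm (vp - vp'))
             + \<sigma>y (norm (y - y')) + \<sigma>y (norm (h (f x u w) vp - h (f x' u w') vp'))"
begin

definition mismatch ::
    "(nat \<Rightarrow> 'v) \<Rightarrow> (nat \<Rightarrow> 'y) \<Rightarrow> (nat \<Rightarrow> 'x) \<Rightarrow> (nat \<Rightarrow> 'v) \<Rightarrow> nat \<Rightarrow> real"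
  where "mismatch v y xs vs i = \<sigma>v (norm (v i - vs i)) + \<sigma>y (norm (y i - h (xs i) (vs i)))"

lemma mismatch_nonneg: "0 \<le> mismatch v y xs vs i"
  unfolding mismatch_def using class_K_nonneg[OF \<sigma>v] class_K_nonneg[OF \<sigma>y]
  by (simp add: add_nonneg_nonneg)

lemma lyapunov_window_step:
  assumes sol: "is_solution f h X U V Y x u w v y" and feas: "mhe_feasible f h X V Y N k u xs vs ws"
    and j: "k - min N k \<le> j" "j < k"
  shows "Vf (x (Suc j)) (xs (Suc j))
    \<le> \<mu> * Vf (x j) (xs j) + mismatch v y xs vs j + mismatch v y xs vs (Suc j)"
proof -
  have x: "x i \<in> X" "u i \<in> U" "v i \<in> V" "y i \<in> Y" "x (Suc i) = f (x i) (u i) (w i)"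
    "y i = h (x i) (v i)" for i
    using sol unfolding is_solution_def by blast+
  have xs_step: "xs (Suc j) = f (xs j) (u j) (ws j)"
    using feas j by (simp add: mhe_feasible_def)
  have xs: "xs i \<in> X" "vs i \<in> V" "h (xs i) (vs i) \<in> Y" if "k - min N k \<le> i" "i \<le> k" for i
    using feas that by (simp_all add: mhe_feasible_def)
  have "Vf (f (x j) (u j) (w j)) (f (xs j) (u j) (ws j)) \<le> \<mu> * Vf (x j) (xs j)
      + \<sigma>v (norm (v j - vs j)) + \<sigma>v (norm (v (Suc j) - vs (Suc j)))
      + \<sigma>y (norm (y j - h (xs j) (vs j)))
      + \<sigma>y (norm (h (f (x j) (u j) (w j)) (v (Suc j)) - h (f (xs j) (u j) (ws j)) (vs (Suc j))))"
    using j x(4)[of "Suc j"] xs(3)[of "Suc j"]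
    by (intro Vf_decr x xs) (simp_all add: x(5,6)[symmetric] xs_step[symmetric])
  then show ?thesis
    by (simp add: mismatch_def x(5,6)[symmetric] xs_step[symmetric])
qed

lemma lyapunov_window_bound:
  assumes sol: "is_solution f h X U V Y x u w v y" and feas: "mhe_feasible f h X V Y N k u xs vs ws"
  shows "Vf (x k) (xs k) \<le> \<mu> ^ min N k * Vf (x (k - min N k)) (xs (k - min N k))
    + (\<Sum>j\<le>min N k. chain_weight \<mu> j * mismatch v y xs vs (k - j))"
  using unrolled_recursion_bound[of \<mu> "mismatch v y xs vs" "k - min N k" "min N k" "\<lambda>i. Vf (x i) (xs i)"]
    lyapunov_window_step[OF sol feas] \<mu> mismatch_nonneg
  by simp

lemma mhe_cost_solution:
  assumes "is_solution f h X U V Y x u w v y"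
  shows "mhe_cost h \<mu> \<alpha>2 \<sigma>v \<sigma>y N k p vbar y x v = \<mu> ^ min N k * \<alpha>2 (2 * norm (x (k - min N k) - p))
    + (\<Sum>j\<le>min N k. 2 * \<mu> powi (int j - 1) * \<sigma>v (2 * norm (v (k - j) - vbar (k - j))))"
  using assms \<sigma>y by (simp add: mhe_cost_def is_solution_def class_K_def)

lemma weighted_mismatch_le_cost:
  "(\<Sum>j\<le>min N k. chain_weight \<mu> j * mismatch v y xs vs (k - j))
    \<le> (\<Sum>j\<le>min N k. 2 * \<mu> powi (int j - 1) * \<sigma>v (2 * norm (v (k - j) - vbar (k - j))))
      + mhe_cost h \<mu> \<alpha>2 \<sigma>v \<sigma>y N k p vbar y xs vs - \<mu> ^ min N k * \<alpha>2 (2 * norm (xs (k - min N k) - p))"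
proof -
  let ?w = "\<lambda>j. 2 * \<mu> powi (int j - 1)"
  have "(\<Sum>j\<le>min N k. chain_weight \<mu> j * mismatch v y xs vs (k - j))
      \<le> (\<Sum>j\<le>min N k. ?w j * (\<sigma>v (2 * norm (v (k - j) - vbar (k - j)))
          + \<sigma>v (2 * norm (vs (k - j) - vbar (k - j))) + \<sigma>y (norm (y (k - j) - h (xs (k - j)) (vs (k - j))))))"
    using chain_weight_le[OF \<mu>] chain_weight_nonneg \<mu> mismatch_nonneg
      class_K_norm_diff_le[OF \<sigma>v, of "v _" "vs _" "vbar _"]
    by (intro sum_mono mult_mono) (auto simp: mismatch_def)
  then show ?thesis
    by (simp add: mhe_cost_def distrib_left sum.distrib)
qed

lemma mhe_window_bound:
  assumes sol: "is_solution f h X U V Y x u w v y" and feas: "mhe_feasible f h X V Y N k u xs vs ws"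
    and opt: "\<And>xs' vs' ws'. mhe_feasible f h X V Y N k u xs' vs' ws' \<Longrightarrow>
      mhe_cost h \<mu> \<alpha>2 \<sigma>v \<sigma>y N k p vbar y xs vs \<le> mhe_cost h \<mu> \<alpha>2 \<sigma>v \<sigma>y N k p vbar y xs' vs'"
  shows "\<alpha>1 (norm (x k - xs k)) \<le> 2 * \<mu> ^ min N k * \<alpha>2 (2 * norm (x (k - min N k) - p))
    + (\<Sum>j\<le>min N k. 4 * \<mu> powi (int j - 1) * \<sigma>v (2 * norm (v (k - j) - vbar (k - j))))"
proof -
  define M where "M = min N k"
  define t where "t = k - M"
  let ?cost = "mhe_cost h \<mu> \<alpha>2 \<sigma>v \<sigma>y N k p vbar y"
  define Sv where "Sv = (\<Sum>j\<le>M. 2 * \<mu> powi (int j - 1) * \<sigma>v (2 * norm (v (k - j) - vbar (k - j))))"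
  have x_in: "x i \<in> X" for i using sol by (simp add: is_solution_def)
  have xs_in: "xs i \<in> X" if "t \<le> i" "i \<le> k" for i
    using feas that by (simp add: mhe_feasible_def M_def t_def)
  have "Vf (x t) (xs t) \<le> \<alpha>2 (norm (x t - xs t))"
    using Vf_bounds[OF x_in xs_in[of t]] by (simp add: t_def)
  also have "\<dots> \<le> \<alpha>2 (2 * norm (x t - p)) + \<alpha>2 (2 * norm (xs t - p))"
    by (rule class_K_norm_diff_le[OF \<alpha>2])
  finally have prior: "\<mu> ^ M * Vf (x t) (xs t)
      \<le> \<mu> ^ M * \<alpha>2 (2 * norm (x t - p)) + \<mu> ^ M * \<alpha>2 (2 * norm (xs t - p))"
    using \<mu> by (simp add: distrib_left[symmetric] mult_left_mono)
  have "\<alpha>1 (norm (x k - xs k)) \<le> Vf (x k) (xs k)"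
    using Vf_bounds[OF x_in xs_in[of k]] by (simp add: t_def)
  also have "\<dots> \<le> \<mu> ^ M * \<alpha>2 (2 * norm (x t - p)) + Sv + ?cost xs vs"
    using lyapunov_window_bound[OF sol feas] prior
      weighted_mismatch_le_cost[where N = N and k = k and v = v and y = y and xs = xs and vs = vs
        and vbar = vbar and p = p]
    unfolding Sv_def M_def t_def by linarith
  also have "?cost xs vs \<le> ?cost x v"
    by (rule opt[OF solution_mhe_feasible[OF sol]])
  also have "?cost x v = \<mu> ^ M * \<alpha>2 (2 * norm (x t - p)) + Sv"
    unfolding mhe_cost_solution[OF sol] Sv_def M_def t_def ..
  finally show ?thesis
    by (simp add: Sv_def M_def t_def sum_distrib_left mult.assoc)
qed

lemma mhe_estimate_error:
  assumes sol: "is_solution f h X U V Y x u w v y"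
    and est: "mhe_estimates f h X V Y \<mu> \<alpha>2 \<sigma>v \<sigma>y N xbar0 vbar u y xhat"
  shows "\<alpha>1 (norm (x k - xhat k)) \<le> 2 * \<mu> ^ min N k
      * \<alpha>2 (2 * norm (x (k - min N k) - (if k - min N k = 0 then xbar0 else xhat (k - min N k))))
    + (\<Sum>j\<le>min N k. 4 * \<mu> powi (int j - 1) * \<sigma>v (2 * norm (v (k - j) - vbar (k - j))))"
proof -
  obtain xs vs ws where feas: "mhe_feasible f h X V Y N k u xs vs ws"
    and opt: "\<forall>xs' vs' ws'. mhe_feasible f h X V Y N k u xs' vs' ws' \<longrightarrow>
      mhe_cost h \<mu> \<alpha>2 \<sigma>v \<sigma>y N k (if k - min N k = 0 then xbar0 else xhat (k - min N k)) vbar y xs vs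
      \<le> mhe_cost h \<mu> \<alpha>2 \<sigma>v \<sigma>y N k (if k - min N k = 0 then xbar0 else xhat (k - min N k)) vbar y xs' vs'"
    and "xhat k = xs k"
    using est unfolding mhe_estimates_def Let_def by blast
  then show ?thesis using mhe_window_bound[OF sol feas opt[rule_format]] by simp
qed


lemma mhe_error_geometric_bound:
  assumes contraction: "\<And>e. 0 \<le> e \<Longrightarrow> 2 * \<mu> ^ N * \<alpha>2 (2 * e) \<le> \<rho> * \<alpha>1 e"
    and \<rho>: "0 \<le> \<rho>" and l: "0 < l" "l < 1" "\<mu> \<le> l" "\<rho> \<le> l ^ Suc N"
    and sol: "is_solution f h X U V Y x u w v y"
    and est: "mhe_estimates f h X V Y \<mu> \<alpha>2 \<sigma>v \<sigma>y N xbar0 vbar u y xhat"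
  shows "\<alpha>1 (norm (x k - xhat k)) \<le> 2 * l ^ k * \<alpha>2 (2 * norm (x 0 - xbar0))
    + (\<Sum>i\<le>k. 4 / \<mu> / (1 - l) * l ^ i * \<sigma>v (2 * norm (v (k - i) - vbar (k - i))))"
proof -
  note err = mhe_estimate_error[OF sol est]
  have c: "4 * \<mu> powi (int j - 1) \<le> 4 / \<mu> * l ^ j" for j
    using \<mu> l by (simp add: power_int_diff divide_right_mono power_mono)
  have "\<alpha>1 (norm (x k - xhat k)) \<le> l ^ k * (2 * \<alpha>2 (2 * norm (x 0 - xbar0)))
    + (\<Sum>i\<le>k. 4 / \<mu> / (1 - l) * l ^ i * \<sigma>v (2 * norm (v (k - i) - vbar (k - i))))"
  proof (rule delayed_recursion_bound[OF l(1,2) \<rho> l(4) _ c])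
    fix k assume "k \<le> N"
    moreover have "2 * \<mu> ^ k * \<alpha>2 (2 * norm (x 0 - xbar0)) \<le> l ^ k * (2 * \<alpha>2 (2 * norm (x 0 - xbar0)))"
      using \<mu> l class_K_nonneg[OF \<alpha>2] by (simp add: mult_right_mono power_mono)
    ultimately show "\<alpha>1 (norm (x k - xhat k)) \<le> l ^ k * (2 * \<alpha>2 (2 * norm (x 0 - xbar0)))
      + (\<Sum>j\<le>k. 4 * \<mu> powi (int j - 1) * \<sigma>v (2 * norm (v (k - j) - vbar (k - j))))"
      using err[of k] by simp
  next
    fix k assume "N < k"
    then show "\<alpha>1 (norm (x k - xhat k)) \<le> \<rho> * \<alpha>1 (norm (x (k - N) - xhat (k - N)))
      + (\<Sum>j\<le>N. 4 * \<mu> powi (int j - 1) * \<sigma>v (2 * norm (v (k - j) - vbar (k - j))))"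
      using err[of k] contraction[of "norm (x (k - N) - xhat (k - N))"] by simp
  qed (use \<mu> class_K_nonneg[OF \<alpha>2] class_K_nonneg[OF \<sigma>v] in auto)
  then show ?thesis by (simp add: mult_ac)
qed
end

theorem theorem3:
  fixes f :: "'x::euclidean_space \<Rightarrow> 'u::euclidean_space \<Rightarrow> 'w::euclidean_space \<Rightarrow> 'x"
    and h :: "'x \<Rightarrow> 'v::euclidean_space \<Rightarrow> 'y::euclidean_space"
    and X :: "'x set" and U :: "'u set" and V :: "'v set" and Y :: "'y set"
    and Vf :: "'x \<Rightarrow> 'x \<Rightarrow> real"
    and \<alpha>1 \<alpha>2 \<sigma>v \<sigma>y :: "real \<Rightarrow> real" and \<mu> :: real and N :: nat
  assumes f_C1: "C1_fun (\<lambda>(x, u, w). f x u w)"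
    and h_C1: "C1_fun (\<lambda>(x, v). h x v)"
    and detect: "strongly_nl_detectable f h X U V Y"
    and \<alpha>1: "class_Kinf \<alpha>1" and \<alpha>2: "class_Kinf \<alpha>2"
    and \<sigma>v: "class_K \<sigma>v" and \<sigma>y: "class_K \<sigma>y"
    and \<mu>: "0 < \<mu>" "\<mu> < 1"
    and Vf_nonneg: "\<And>x x'. x \<in> X \<Longrightarrow> x' \<in> X \<Longrightarrow> 0 \<le> Vf x x'"
    and Vf_bounds: "\<And>x x'. x \<in> X \<Longrightarrow> x' \<in> X \<Longrightarrow>
          \<alpha>1 (norm (x - x')) \<le> Vf x x' \<and> Vf x x' \<le> \<alpha>2 (norm (x - x'))"
    and Vf_decr: "\<And>x u w v y x' w' v' y' vp vp'.
          x \<in> X \<Longrightarrow> u \<in> U \<Longrightarrow> v \<in> V \<Longrightarrow> y \<in> Y \<Longrightarrow>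
          x' \<in> X \<Longrightarrow> v' \<in> V \<Longrightarrow> y' \<in> Y \<Longrightarrow> vp \<in> V \<Longrightarrow> vp' \<in> V \<Longrightarrow>
          y = h x v \<Longrightarrow> y' = h x' v' \<Longrightarrow>
          h (f x u w) vp \<in> Y \<Longrightarrow> h (f x' u w') vp' \<in> Y \<Longrightarrow>
          Vf (f x u w) (f x' u w') \<le> \<mu> * Vf x x' + \<sigma>v (norm (v - v')) + \<sigma>v (norm (vp - vp'))
             + \<sigma>y (norm (y - y')) + \<sigma>y (norm (h (f x u w) vp - h (f x' u w') vp'))"
    and horizon: "\<exists>\<rho>. 0 < \<rho> \<and> \<rho> < 1 \<and>
          (\<forall>r>0. 2 * \<mu> ^ N * \<alpha>2 (2 * inv_into {0..} \<alpha>1 r) < \<rho> * r)"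
  shows "\<exists>\<beta> \<beta>0 \<beta>v. class_Kinf \<beta> \<and> class_KL \<beta>0 \<and> summable_KL \<beta>v \<and>
     (\<forall>x u w v y xbar0 vbar xhat.
        is_solution f h X U V Y x u w v y \<longrightarrow> xbar0 \<in> X \<longrightarrow> (\<forall>i. vbar i \<in> V) \<longrightarrow>
        mhe_estimates f h X V Y \<mu> \<alpha>2 \<sigma>v \<sigma>y N xbar0 vbar u y xhat \<longrightarrow>
        (\<forall>k. \<beta> (norm (x k - xhat k)) \<le> \<beta>0 (norm (x 0 - xbar0)) k +
               (\<Sum>i\<le>k. \<beta>v (norm (v (k - i) - vbar (k - i))) i)))"
proof -
  obtain \<rho> where \<rho>: "0 < \<rho>" "\<rho> < 1"
    and hz: "\<And>r. 0 < r \<Longrightarrow> 2 * \<mu> ^ N * \<alpha>2 (2 * inv_into {0..} \<alpha>1 r) < \<rho> * r"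
    using horizon by blast
  have K: "class_K \<alpha>1" "class_K \<alpha>2" using \<alpha>1 \<alpha>2 by (simp_all add: class_Kinf_def)
  interpret L: incremental_ioss_lyapunov f h X U V Y Vf \<alpha>1 \<alpha>2 \<sigma>v \<sigma>y \<mu>
    by unfold_locales (fact K \<sigma>v \<sigma>y \<mu> Vf_bounds Vf_decr)+
  have contraction: "2 * \<mu> ^ N * \<alpha>2 (2 * e) \<le> \<rho> * \<alpha>1 e" if "0 \<le> e" for e
    using class_K_inv_into_bound[OF K(1), of "\<lambda>e. 2 * \<mu> ^ N * \<alpha>2 (2 * e)"] hz that K(2)
    by (simp add: class_K_def)
  obtain l where l: "0 < l" "l < 1" "\<mu> \<le> l" "\<rho> \<le> l ^ Suc N"
    using exists_rate_above[of \<mu> \<rho>] \<mu> \<rho> by auto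
  define \<beta>0 where "\<beta>0 r k = 2 * l ^ k * \<alpha>2 (2 * r)" for r k
  define \<beta>v where "\<beta>v r k = 4 / \<mu> / (1 - l) * l ^ k * \<sigma>v (2 * r)" for r k
  have "class_KL \<beta>0"
    unfolding \<beta>0_def by (rule class_KL_geometric[OF K(2)]) (use l in auto)
  moreover have "summable_KL \<beta>v"
    unfolding \<beta>v_def by (rule summable_KL_geometric[OF \<sigma>v]) (use \<mu> l in auto)
  moreover have "\<alpha>1 (norm (x k - xhat k)) \<le> \<beta>0 (norm (x 0 - xbar0)) k
      + (\<Sum>i\<le>k. \<beta>v (norm (v (k - i) - vbar (k - i))) i)"
    if "is_solution f h X U V Y x u w v y"
      and "mhe_estimates f h X V Y \<mu> \<alpha>2 \<sigma>v \<sigma>y N xbar0 vbar u y xhat"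
    for x u w v y xbar0 vbar xhat k
    using L.mhe_error_geometric_bound[OF contraction _ l that] \<rho> unfolding \<beta>0_def \<beta>v_def by simp
  ultimately show ?thesis using \<alpha>1 by blast
qed

end
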